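(* Let $(X,\tau)$ be a topological space and $A\subseteq X$. Then $A$ is statistically compact in $(X,\tau)$ if and only if $A$ is statistically compact in $(X,\tau_{ST})$.
   Context: For $A\subseteq\mathbb{N}$ let $d_n(A)=|A\cap\{1,\dots,n\}|/n$, $\overline{d}(A)=\limsup_n d_n(A)$, $\underline{d}(A)=\liminf_n d_n(A)$, and $d(A)$ their common value when equal. A sequence in $X$ is a map from an infinite subset $M\subseteq\mathbb{N}$ into $X$, written $(x_n)_{n\in M}$; a subsequence is $(x_n)_{n\in N}$ with $N\subseteq M$ infinite. It is nonthin if $\overline{d}(M)>0$. A nonthin sequence $(x_n)_{n\in M}$ is statistically convergent to $a\in X$ if for every open $U\ni a$, $d(\{n\in M:x_n\notin U\})=0$. The statistical closure $\overline{F}^{ST}$ of $F\subseteq X$ is the set of $x\in X$ such that some nonthin sequence in $F$ is statistically convergent to $x$; $F$ is statistically closed if $\overline{F}^{ST}=F$. $\tau_{ST}=\{F\subseteq X: X\setminus F$ is statistically closed in $(X,\tau)\}$; this is a topology on $X$ containing $\tau$. A topological space is statistically compact if every nonthin sequence in it has a nonthin subsequence that is statistically convergent to some point of the space; a subset is statistically compact if it is so in the subspace topology. *)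

theory Defs
  imports "HOL-Analysis.Analysis" "HOL-Library.Liminf_Limsup"
begin

definition dens_n :: "nat set \<Rightarrow> nat \<Rightarrow> real" where
  "dens_n A n = real (card (A \<inter> {1..n})) / real n"

definition upper_density :: "nat set \<Rightarrow> ereal" where
  "upper_density A = limsup (\<lambda>n. ereal (dens_n A n))"

definition density_zero :: "nat set \<Rightarrow> bool" where
  "density_zero A \<longleftrightarrow> (dens_n A \<longlonglongrightarrow> 0)"

definition nonthin :: "nat set \<Rightarrow> bool" where
  "nonthin M \<longleftrightarrow> infinite M \<and> upper_density M > 0"

text \<open>A sequence is a pair (M, s): infinite index set M and values s n for n in M.
  Nonthin sequence (M,s) statistically convergent to a in topology T.\<close>
definition stat_conv :: "'a topology \<Rightarrow> nat set \<Rightarrow> (nat \<Rightarrow> 'a) \<Rightarrow> 'a \<Rightarrow> bool" where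
  "stat_conv T M s a \<longleftrightarrow> nonthin M \<and> a \<in> topspace T \<and> s ` M \<subseteq> topspace T \<and>
     (\<forall>U. openin T U \<and> a \<in> U \<longrightarrow> density_zero {n \<in> M. s n \<notin> U})"

definition stat_closure :: "'a topology \<Rightarrow> 'a set \<Rightarrow> 'a set" where
  "stat_closure T F = {x \<in> topspace T. \<exists>M s. nonthin M \<and> s ` M \<subseteq> F \<and> stat_conv T M s x}"

definition stat_closed :: "'a topology \<Rightarrow> 'a set \<Rightarrow> bool" where
  "stat_closed T F \<longleftrightarrow> stat_closure T F = F"

definition tau_ST :: "'a topology \<Rightarrow> 'a topology" where
  "tau_ST T = topology (\<lambda>U. U \<subseteq> topspace T \<and> stat_closed T (topspace T - U))"

definition stat_compact_space :: "'a topology \<Rightarrow> bool" where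
  "stat_compact_space T \<longleftrightarrow>
     (\<forall>M s. nonthin M \<and> s ` M \<subseteq> topspace T \<longrightarrow>
        (\<exists>N a. N \<subseteq> M \<and> nonthin N \<and> a \<in> topspace T \<and> stat_conv T N s a))"

definition stat_compact_in :: "'a topology \<Rightarrow> 'a set \<Rightarrow> bool" where
  "stat_compact_in T A \<longleftrightarrow> stat_compact_space (subtopology T A)"

end

theory Submission
  imports Defs
begin

text \<open>A sequence in \<open>A\<close> has the same statistical limits in \<open>\<tau>\<close>, in \<open>\<tau>\<^sub>S\<^sub>T\<close> and in the
  subspace \<open>A\<close> of either. For \<open>\<tau> \<subseteq> \<tau>\<^sub>S\<^sub>T\<close> one direction is trivial; conversely, if a
  \<open>\<tau>\<^sub>S\<^sub>T\<close>-open neighbourhood \<open>U\<close> of the limit were left on a set of positive upper density,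
  that nonthin subsequence would lie in the statistically closed set \<open>X - U\<close> and still
  converge statistically to the limit, which would then lie in \<open>X - U\<close>. Since statistical
  compactness only refers to statistical convergence of sequences in \<open>A\<close>, the two notions
  of compactness coincide.\<close>

lemma dens_n_nonneg: "dens_n A n \<ge> 0"
  by (simp add: dens_n_def)

lemma density_zero_mono:
  assumes "A \<subseteq> B" "density_zero B"
  shows "density_zero A"
  unfolding density_zero_def
proof (rule tendsto_sandwich[of "\<lambda>n. 0" _ _ "dens_n B"])
  show "\<forall>\<^sub>F n in sequentially. dens_n A n \<le> dens_n B n"
  proof (intro always_eventually allI)
    fix n
    have "card (A \<inter> {1..n}) \<le> card (B \<inter> {1..n})"
      using assms(1) by (intro card_mono) auto
    then show "dens_n A n \<le> dens_n B n"
      unfolding dens_n_def by (simp add: divide_right_mono)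
  qed
qed (use assms(2) in \<open>simp_all add: dens_n_nonneg density_zero_def\<close>)

lemma density_zero_Un:
  assumes "density_zero A" "density_zero B"
  shows "density_zero (A \<union> B)"
  unfolding density_zero_def
proof (rule tendsto_sandwich[of "\<lambda>n. 0" _ _ "\<lambda>n. dens_n A n + dens_n B n"])
  show "\<forall>\<^sub>F n in sequentially. dens_n (A \<union> B) n \<le> dens_n A n + dens_n B n"
  proof (intro always_eventually allI)
    fix n
    have "card ((A \<union> B) \<inter> {1..n}) \<le> card (A \<inter> {1..n}) + card (B \<inter> {1..n})"
      by (metis Int_Un_distrib2 card_Un_le)
    then show "dens_n (A \<union> B) n \<le> dens_n A n + dens_n B n"
      unfolding dens_n_def by (metis add_divide_distrib divide_right_mono of_nat_0_le_iff of_nat_add of_nat_mono)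
  qed
  show "(\<lambda>n. dens_n A n + dens_n B n) \<longlonglongrightarrow> 0"
    using tendsto_add[OF assms[unfolded density_zero_def]] by simp
qed (simp_all add: dens_n_nonneg)

lemma density_zero_finite:
  assumes "finite A"
  shows "density_zero A"
  unfolding density_zero_def
proof (rule tendsto_sandwich[of "\<lambda>n. 0" _ _ "\<lambda>n. real (card A) / real n"])
  show "\<forall>\<^sub>F n in sequentially. dens_n A n \<le> real (card A) / real n"
  proof (intro always_eventually allI)
    fix n
    have "card (A \<inter> {1..n}) \<le> card A"
      using assms by (intro card_mono) auto
    then show "dens_n A n \<le> real (card A) / real n"
      unfolding dens_n_def by (simp add: divide_right_mono)
  qed
  show "(\<lambda>n. real (card A) / real n) \<longlonglongrightarrow> 0"
    by (intro tendsto_divide_0[OF tendsto_const] filterlim_at_top_imp_at_infinity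
        filterlim_real_sequentially)
qed (simp_all add: dens_n_nonneg)

text \<open>Since the densities are nonnegative, upper density \<open>0\<close> already means density \<open>0\<close>.\<close>

lemma nonthin_iff_not_density_zero: "nonthin M \<longleftrightarrow> \<not> density_zero M"
proof
  assume "nonthin M"
  then show "\<not> density_zero M"
    unfolding nonthin_def density_zero_def upper_density_def
    using lim_imp_Limsup[of sequentially "\<lambda>n. ereal (dens_n M n)" 0] lim_ereal[of "dens_n M" 0]
    by (auto simp: zero_ereal_def)
next
  assume not_zero: "\<not> density_zero M"
  have "upper_density M > 0"
  proof (rule ccontr)
    assume "\<not> upper_density M > 0"
    then have "limsup (\<lambda>n. ereal (dens_n M n)) \<le> 0"
      by (simp add: upper_density_def)
    moreover have "0 \<le> liminf (\<lambda>n. ereal (dens_n M n))"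
      by (intro Liminf_bounded) (simp add: dens_n_nonneg)
    moreover have "liminf (\<lambda>n. ereal (dens_n M n)) \<le> limsup (\<lambda>n. ereal (dens_n M n))"
      by (simp add: Liminf_le_Limsup)
    ultimately have "(\<lambda>n. ereal (dens_n M n)) \<longlonglongrightarrow> ereal 0"
      by (subst tendsto_iff_Liminf_eq_Limsup) (auto simp: zero_ereal_def)
    with not_zero show False
      by (simp add: density_zero_def)
  qed
  moreover have "infinite M"
    using not_zero density_zero_finite by blast
  ultimately show "nonthin M"
    by (simp add: nonthin_def)
qed

lemma nonthin_UNIV: "nonthin UNIV"
proof -
  have "\<forall>\<^sub>F n in sequentially. dens_n UNIV n = 1"
    using eventually_ge_at_top[of 1] by eventually_elim (simp add: dens_n_def)
  then have "dens_n UNIV \<longlonglongrightarrow> 1"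
    by (rule tendsto_eventually)
  then show ?thesis
    unfolding nonthin_iff_not_density_zero density_zero_def using LIMSEQ_unique by fastforce
qed

lemma stat_conv_subset:
  assumes "stat_conv T M s x" "N \<subseteq> M" "nonthin N"
  shows "stat_conv T N s x"
  unfolding stat_conv_def
proof (intro conjI allI impI)
  fix U assume "openin T U \<and> x \<in> U"
  with assms(1) have "density_zero {n \<in> M. s n \<notin> U}"
    unfolding stat_conv_def by blast
  moreover have "{n \<in> N. s n \<notin> U} \<subseteq> {n \<in> M. s n \<notin> U}"
    using assms(2) by blast
  ultimately show "density_zero {n \<in> N. s n \<notin> U}"
    by (rule density_zero_mono[rotated])
qed (use assms in \<open>auto simp: stat_conv_def\<close>)

lemma stat_closureI:
  assumes "stat_conv T M s x" "N \<subseteq> M" "nonthin N" "s ` N \<subseteq> F"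
  shows "x \<in> stat_closure T F"
proof -
  have "stat_conv T N s x"
    using assms(1-3) by (rule stat_conv_subset)
  moreover have "x \<in> topspace T"
    using assms(1) by (simp add: stat_conv_def)
  ultimately show ?thesis
    unfolding stat_closure_def using assms(3,4) by blast
qed

lemma stat_closure_subset_topspace: "stat_closure T F \<subseteq> topspace T"
  by (auto simp: stat_closure_def)

lemma stat_closure_superset:
  assumes "F \<subseteq> topspace T"
  shows "F \<subseteq> stat_closure T F"
proof
  fix x assume "x \<in> F"
  have "stat_conv T UNIV (\<lambda>n. x) x"
    using \<open>x \<in> F\<close> assms nonthin_UNIV density_zero_finite[of "{}"] by (auto simp: stat_conv_def)
  then show "x \<in> stat_closure T F"
    using \<open>x \<in> F\<close> nonthin_UNIV by (auto intro: stat_closureI)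
qed

lemma stat_closure_mono: "F \<subseteq> G \<Longrightarrow> stat_closure T F \<subseteq> stat_closure T G"
  unfolding stat_closure_def by blast

lemma stat_closed_iff: "stat_closed T F \<longleftrightarrow> F \<subseteq> topspace T \<and> stat_closure T F \<subseteq> F"
proof
  assume "stat_closed T F"
  then show "F \<subseteq> topspace T \<and> stat_closure T F \<subseteq> F"
    using stat_closure_subset_topspace[of T F] by (simp add: stat_closed_def)
next
  assume "F \<subseteq> topspace T \<and> stat_closure T F \<subseteq> F"
  then show "stat_closed T F"
    using stat_closure_superset[of F T] by (simp add: stat_closed_def subset_antisym)
qed

lemma closedin_imp_stat_closed:
  assumes "closedin T F"
  shows "stat_closed T F"
  unfolding stat_closed_iff
proof
  show "F \<subseteq> topspace T"
    using assms closedin_subset by blast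
  show "stat_closure T F \<subseteq> F"
  proof
    fix x assume "x \<in> stat_closure T F"
    then obtain M s where x: "x \<in> topspace T" and M: "nonthin M" "s ` M \<subseteq> F" "stat_conv T M s x"
      unfolding stat_closure_def by blast
    show "x \<in> F"
    proof (rule ccontr)
      assume "x \<notin> F"
      with assms x have "openin T (topspace T - F)" "x \<in> topspace T - F"
        by (simp_all add: closedin_def)
      with M(3) have "density_zero {n \<in> M. s n \<notin> topspace T - F}"
        unfolding stat_conv_def by blast
      moreover have "{n \<in> M. s n \<notin> topspace T - F} = M"
        using M(2) by auto
      ultimately show False
        using M(1) by (simp add: nonthin_iff_not_density_zero)
    qed
  qed
qed

lemma stat_closed_Un:
  assumes "stat_closed T F" "stat_closed T G"
  shows "stat_closed T (F \<union> G)"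
  unfolding stat_closed_iff
proof
  show "F \<union> G \<subseteq> topspace T"
    using assms by (simp add: stat_closed_iff)
  show "stat_closure T (F \<union> G) \<subseteq> F \<union> G"
  proof
    fix x assume "x \<in> stat_closure T (F \<union> G)"
    then obtain M s where M: "nonthin M" "s ` M \<subseteq> F \<union> G" "stat_conv T M s x"
      unfolding stat_closure_def by blast
    have "M = {n \<in> M. s n \<in> F} \<union> {n \<in> M. s n \<in> G}"
      using M(2) by auto
    with M(1) have "nonthin {n \<in> M. s n \<in> F} \<or> nonthin {n \<in> M. s n \<in> G}"
      unfolding nonthin_iff_not_density_zero by (metis density_zero_Un)
    moreover have "x \<in> stat_closure T H" if "nonthin {n \<in> M. s n \<in> H}" for H
      by (rule stat_closureI[OF M(3) _ that]) auto
    ultimately have "x \<in> stat_closure T F \<or> x \<in> stat_closure T G"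
      by blast
    with assms show "x \<in> F \<union> G"
      unfolding stat_closed_def by blast
  qed
qed

lemma stat_closed_Inter:
  assumes "\<And>F. F \<in> K \<Longrightarrow> stat_closed T F"
  shows "stat_closed T (topspace T \<inter> \<Inter>K)"
  unfolding stat_closed_iff
proof (intro conjI Int_greatest Inter_greatest stat_closure_subset_topspace)
  fix F assume "F \<in> K"
  then have "stat_closure T (topspace T \<inter> \<Inter>K) \<subseteq> stat_closure T F"
    by (intro stat_closure_mono) blast
  then show "stat_closure T (topspace T \<inter> \<Inter>K) \<subseteq> F"
    using assms[OF \<open>F \<in> K\<close>] unfolding stat_closed_def by simp
qed simp

lemma openin_tau_ST:
  "openin (tau_ST T) U \<longleftrightarrow> U \<subseteq> topspace T \<and> stat_closed T (topspace T - U)"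
proof -
  define P where "P = (\<lambda>U. U \<subseteq> topspace T \<and> stat_closed T (topspace T - U))"
  have "P (S \<inter> U)" if "P S" "P U" for S U
  proof -
    have "topspace T - (S \<inter> U) = (topspace T - S) \<union> (topspace T - U)"
      by blast
    then show ?thesis
      using that stat_closed_Un unfolding P_def by auto
  qed
  moreover have "P (\<Union>K)" if "\<forall>S\<in>K. P S" for K
  proof -
    have "topspace T - \<Union>K = topspace T \<inter> \<Inter>((\<lambda>S. topspace T - S) ` K)"
      by blast
    moreover have "stat_closed T (topspace T \<inter> \<Inter>((\<lambda>S. topspace T - S) ` K))"
      by (rule stat_closed_Inter) (use that in \<open>auto simp: P_def\<close>)
    ultimately show ?thesis
      using that by (auto simp: P_def)
  qed
  ultimately have "istopology P"
    unfolding istopology_def by blast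
  then show ?thesis
    unfolding tau_ST_def P_def[symmetric] by (simp add: P_def)
qed

lemma topspace_tau_ST: "topspace (tau_ST T) = topspace T"
proof -
  have "stat_closed T {}"
    by (simp add: stat_closed_iff stat_closure_def stat_conv_def nonthin_def)
  then have "openin (tau_ST T) (topspace T)"
    by (simp add: openin_tau_ST)
  moreover have "topspace (tau_ST T) \<subseteq> topspace T"
    using openin_topspace[of "tau_ST T"] unfolding openin_tau_ST by blast
  ultimately show ?thesis
    using openin_subset by blast
qed

lemma openin_imp_openin_tau_ST: "openin T U \<Longrightarrow> openin (tau_ST T) U"
  using closedin_imp_stat_closed[of T "topspace T - U"] openin_subset[of T U]
  by (auto simp: openin_tau_ST)

lemma stat_conv_tau_ST_iff:
  assumes "s ` M \<subseteq> topspace T"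
  shows "stat_conv (tau_ST T) M s a \<longleftrightarrow> stat_conv T M s a"
proof
  assume "stat_conv (tau_ST T) M s a"
  then show "stat_conv T M s a"
    unfolding stat_conv_def topspace_tau_ST by (blast intro: openin_imp_openin_tau_ST)
next
  assume conv: "stat_conv T M s a"
  have "density_zero {n \<in> M. s n \<notin> U}" if U: "openin (tau_ST T) U" "a \<in> U" for U
  proof (rule ccontr)
    let ?N = "{n \<in> M. s n \<notin> U}"
    assume "\<not> density_zero ?N"
    then have "nonthin ?N"
      by (simp add: nonthin_iff_not_density_zero)
    moreover have "s ` ?N \<subseteq> topspace T - U"
      using assms by auto
    ultimately have "a \<in> stat_closure T (topspace T - U)"
      using conv by (intro stat_closureI) auto
    with U show False
      by (auto simp: openin_tau_ST stat_closed_def)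
  qed
  with conv assms show "stat_conv (tau_ST T) M s a"
    unfolding stat_conv_def topspace_tau_ST by blast
qed

lemma stat_conv_subtopology_iff:
  assumes "A \<subseteq> topspace T" "s ` M \<subseteq> A" "a \<in> A"
  shows "stat_conv (subtopology T A) M s a \<longleftrightarrow> stat_conv T M s a"
proof -
  have escapes: "{n \<in> M. s n \<notin> U \<inter> A} = {n \<in> M. s n \<notin> U}" for U
    using assms(2) by auto
  have "(\<forall>V. openin (subtopology T A) V \<and> a \<in> V \<longrightarrow> density_zero {n \<in> M. s n \<notin> V}) \<longleftrightarrow>
        (\<forall>U. openin T U \<and> a \<in> U \<longrightarrow> density_zero {n \<in> M. s n \<notin> U})"
  proof (intro iffI allI impI; elim conjE)
    fix U assume "\<forall>V. openin (subtopology T A) V \<and> a \<in> V \<longrightarrow> density_zero {n \<in> M. s n \<notin> V}"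
      and "openin T U" "a \<in> U"
    then show "density_zero {n \<in> M. s n \<notin> U}"
      using assms(3) escapes[of U] openin_subtopology_Int[of T U A] by auto
  next
    fix V assume "\<forall>U. openin T U \<and> a \<in> U \<longrightarrow> density_zero {n \<in> M. s n \<notin> U}"
      and "openin (subtopology T A) V" "a \<in> V"
    then show "density_zero {n \<in> M. s n \<notin> V}"
      using escapes by (auto simp: openin_subtopology)
  qed
  with assms show ?thesis
    unfolding stat_conv_def by (auto simp: Int_absorb1)
qed

lemma stat_compact_space_cong:
  assumes "topspace S = topspace T"
    and "\<And>M s a. s ` M \<subseteq> topspace T \<Longrightarrow> a \<in> topspace T \<Longrightarrow>
           stat_conv S M s a \<longleftrightarrow> stat_conv T M s a"
  shows "stat_compact_space S \<longleftrightarrow> stat_compact_space T"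
proof -
  have "stat_conv S N s a \<longleftrightarrow> stat_conv T N s a"
    if "s ` M \<subseteq> topspace T" "N \<subseteq> M" "a \<in> topspace T" for M N s a
    using that assms(2)[of s N a] by blast
  then show ?thesis
    unfolding stat_compact_space_def assms(1) by meson
qed

theorem mainTheorem15:
  fixes T :: "'a topology" and A :: "'a set"
  assumes "A \<subseteq> topspace T"
  shows "stat_compact_in T A \<longleftrightarrow> stat_compact_in (tau_ST T) A"
  unfolding stat_compact_in_def
proof (rule stat_compact_space_cong)
  have A_ST: "A \<subseteq> topspace (tau_ST T)"
    using assms by (simp add: topspace_tau_ST)
  then show "topspace (subtopology T A) = topspace (subtopology (tau_ST T) A)"
    using assms by (simp add: Int_absorb1)
  fix M :: "nat set" and s :: "nat \<Rightarrow> 'a" and a :: 'a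
  assume "s ` M \<subseteq> topspace (subtopology (tau_ST T) A)" "a \<in> topspace (subtopology (tau_ST T) A)"
  then have seq: "s ` M \<subseteq> A" and lim: "a \<in> A"
    using A_ST by (simp_all add: Int_absorb1)
  have "s ` M \<subseteq> topspace T"
    using seq assms by (rule order_trans)
  then show "stat_conv (subtopology T A) M s a \<longleftrightarrow> stat_conv (subtopology (tau_ST T) A) M s a"
    unfolding stat_conv_subtopology_iff[OF assms seq lim] stat_conv_subtopology_iff[OF A_ST seq lim]
    by (rule stat_conv_tau_ST_iff[symmetric])
qed

end
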